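(* There is $d_0$ such that the following holds for all $d\geq d_0$. Let $G$ be a graph on $n$ vertices with average degree $d$. Then there exists a non-empty bipartite subgraph $G''$ of $G$ with parts $X$ and $Y$ such that $d_{G''}(x)\geq\frac{\Delta(G'')}{160}$ for every $x\in X$, and $d_{G''}(y)\geq\frac{d}{20\log n}$ for every $y\in Y$.
   Context: $d_{G''}(v)$ is the degree of $v$ in $G''$ and $\Delta(G'')$ the maximum degree of $G''$. Logarithms are base $2$. *)

theory Defs
  imports Complex_Main
begin

definition simple_graph :: "'a set \<Rightarrow> ('a \<Rightarrow> 'a \<Rightarrow> bool) \<Rightarrow> bool" where
  "simple_graph V E \<longleftrightarrow> finite V \<and>
     (\<forall>x y. E x y \<longrightarrow> x \<in> V \<and> y \<in> V) \<and>
     (\<forall>x y. E x y \<longrightarrow> E y x) \<and> (\<forall>x. \<not> E x x)"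

definition degree :: "'a set \<Rightarrow> ('a \<Rightarrow> 'a \<Rightarrow> bool) \<Rightarrow> 'a \<Rightarrow> nat" where
  "degree V E v = card {u \<in> V. E v u}"

definition avg_degree :: "'a set \<Rightarrow> ('a \<Rightarrow> 'a \<Rightarrow> bool) \<Rightarrow> real" where
  "avg_degree V E = (\<Sum>v\<in>V. real (degree V E v)) / real (card V)"

definition max_degree :: "'a set \<Rightarrow> ('a \<Rightarrow> 'a \<Rightarrow> bool) \<Rightarrow> nat" where
  "max_degree V E = Max (insert 0 (degree V E ` V))"

definition subgraph :: "'a set \<Rightarrow> ('a \<Rightarrow> 'a \<Rightarrow> bool) \<Rightarrow> 'a set \<Rightarrow> ('a \<Rightarrow> 'a \<Rightarrow> bool) \<Rightarrow> bool" where
  "subgraph V' E' V E \<longleftrightarrow> simple_graph V' E' \<and> V' \<subseteq> V \<and> (\<forall>x y. E' x y \<longrightarrow> E x y)"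

definition bipartite_parts :: "'a set \<Rightarrow> ('a \<Rightarrow> 'a \<Rightarrow> bool) \<Rightarrow> 'a set \<Rightarrow> 'a set \<Rightarrow> bool" where
  "bipartite_parts V E X Y \<longleftrightarrow> X \<inter> Y = {} \<and> X \<union> Y = V \<and>
     (\<forall>x y. E x y \<longrightarrow> (x \<in> X \<and> y \<in> Y) \<or> (x \<in> Y \<and> y \<in> X))"

end

(*
  Take a maximum cut, so that every vertex v keeps at least half of its degree as cut degree
  c v, and sort the vertices by their side of the cut and by their dyadic scale
  2^k <= c v < 2^(k+1).  Every cut edge has an end v whose partner w satisfies c w < 2^(k+1)
  for the scale k of v, so counting only such low edges at v still sees half of the cut edges.
  One of the 2 (floor_log n + 1) classes X, together with the opposite side Y, then spans more
  than |X| 2^(k+1) / 160 + n d / (20 log n) low edges.  Repeatedly deleting vertices of X with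
  fewer than 2^(k+1) / 160 and vertices of Y with fewer than d / (20 log n) of these edges
  cannot delete all of them, and every remaining degree is below 2^(k+1).
*)

theory Submission
  imports Defs "HOL-Library.Discrete_Functions"
begin

lemma card_filter_eq_sum_of_bool:
  assumes "finite A"
  shows "real (card {x\<in>A. P x}) = (\<Sum>x\<in>A. of_bool (P x))"
  using assms by (simp add: Int_def)

lemma ex_maximizer_if_finite:
  fixes f :: "'a \<Rightarrow> 'b::linorder"
  assumes "finite S" "S \<noteq> {}"
  obtains x where "x \<in> S" "\<forall>y\<in>S. f y \<le> f x"
proof -
  have "Max (f ` S) \<in> f ` S" using assms by (intro Max_in) auto
  then obtain x where "x \<in> S" "f x = Max (f ` S)" by auto
  with assms show thesis by (intro that) auto
qed

lemma ex_fibre_sum_gt: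
  fixes g :: "'a \<Rightarrow> real"
  assumes "finite A" "finite T" "f ` A \<subseteq> T" "(\<Sum>x\<in>A. g x) > real (card T) * b"
  obtains i where "i \<in> T" "(\<Sum>x\<in>{x\<in>A. f x = i}. g x) > b"
proof (rule ccontr)
  assume "\<not> thesis"
  have "(\<Sum>x\<in>A. g x) = (\<Sum>i\<in>T. \<Sum>x\<in>{x\<in>A. f x = i}. g x)"
    using assms(1-3) by (rule sum.group[symmetric])
  also have "\<dots> \<le> (\<Sum>i\<in>T. b)"
    using \<open>\<not> thesis\<close> that by (intro sum_mono) (meson not_le)
  finally show False using assms(4) by simp
qed

lemma max_degree_le:
  assumes "finite V" "\<forall>v\<in>V. degree V E v \<le> M"
  shows "max_degree V E \<le> M"
  using assms by (simp add: max_degree_def)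

lemma two_le_card_if_avg_degree_pos:
  assumes G: "simple_graph V E" and pos: "avg_degree V E > 0"
  shows "card V \<ge> 2"
proof -
  have fV: "finite V" and irr: "\<And>x. \<not> E x x" using G by (auto simp: simple_graph_def)
  have "(\<Sum>v\<in>V. real (degree V E v)) \<noteq> 0" using pos by (auto simp: avg_degree_def)
  then obtain v where v: "v \<in> V" "real (degree V E v) \<noteq> 0"
    by (rule sum.not_neutral_contains_not_neutral)
  then have "{u\<in>V. E v u} \<noteq> {}" by (auto simp: degree_def simp del: Collect_empty_eq)
  then obtain w where w: "w \<in> V" "E v w" by blast
  with irr have "card {v, w} = 2" by (metis card_2_iff)
  moreover have "card {v, w} \<le> card V" using v w fV by (intro card_mono) auto
  ultimately show ?thesis by simp
qed

lemma floor_log_le_log: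
  assumes "n > 0"
  shows "real (floor_log n) \<le> log 2 (real n)"
  using assms by (simp add: floor_log_altdef)

text \<open>Choose the pair of subsets maximising the edge count minus the cost
  \<open>a\<close> per vertex of \<open>X'\<close> and \<open>t\<close> per vertex of \<open>Y'\<close>: deleting a vertex of lower
  degree would increase this potential.\<close>

lemma bipartite_relation_min_degree_core:
  fixes R :: "'a \<Rightarrow> 'b \<Rightarrow> bool" and a t :: real
  assumes fX: "finite X" and fY: "finite Y" and a0: "a \<ge> 0" and t0: "t \<ge> 0"
    and dense: "(\<Sum>x\<in>X. real (card {y\<in>Y. R x y})) > real (card X) * a + real (card Y) * t"
  obtains X' Y' where "X' \<subseteq> X" "Y' \<subseteq> Y" "\<exists>x\<in>X'. \<exists>y\<in>Y'. R x y"
    "\<forall>x\<in>X'. real (card {y\<in>Y'. R x y}) \<ge> a" "\<forall>y\<in>Y'. real (card {x\<in>X'. R x y}) \<ge> t"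
proof -
  define e where "e A B = (\<Sum>x\<in>A. \<Sum>y\<in>B. (of_bool (R x y) :: real))" for A B
  define \<phi> where "\<phi> P = e (fst P) (snd P) - real (card (fst P)) * a - real (card (snd P)) * t"
    for P
  have "finite (Pow X \<times> Pow Y)" "Pow X \<times> Pow Y \<noteq> {}" using fX fY by auto
  then obtain P where P: "P \<in> Pow X \<times> Pow Y" and max: "\<forall>Q\<in>Pow X \<times> Pow Y. \<phi> Q \<le> \<phi> P"
    by (rule ex_maximizer_if_finite)
  obtain X' Y' where P_eq: "P = (X', Y')" by (cases P)
  have sub: "X' \<subseteq> X" "Y' \<subseteq> Y" using P P_eq by auto
  have maximal: "\<phi> (A, B) \<le> \<phi> (X', Y')" if "A \<subseteq> X" "B \<subseteq> Y" for A B
    using max that unfolding P_eq by simp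
  have fX': "finite X'" and fY': "finite Y'" using sub fX fY by (auto intro: finite_subset)
  have "e X Y = (\<Sum>x\<in>X. real (card {y\<in>Y. R x y}))"
    unfolding e_def card_filter_eq_sum_of_bool[OF fY] ..
  with dense have "\<phi> (X, Y) > 0" unfolding \<phi>_def by simp
  then have "\<phi> (X', Y') > 0" using maximal[of X Y] by simp
  moreover have "real (card X') * a \<ge> 0" "real (card Y') * t \<ge> 0" using a0 t0 by simp_all
  ultimately have "e X' Y' \<noteq> 0" unfolding \<phi>_def fst_conv snd_conv by linarith
  have edge: "\<exists>x\<in>X'. \<exists>y\<in>Y'. R x y"
  proof (rule ccontr)
    assume "\<not> ?thesis"
    then have "e X' Y' = 0" unfolding e_def by (intro sum.neutral ballI) simp
    with \<open>e X' Y' \<noteq> 0\<close> show False by contradiction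
  qed
  have deg_X: "real (card {y\<in>Y'. R x y}) \<ge> a" if x: "x \<in> X'" for x
  proof (rule ccontr)
    assume "\<not> ?thesis"
    moreover have "e X' Y' = real (card {y\<in>Y'. R x y}) + e (X' - {x}) Y'"
      unfolding e_def card_filter_eq_sum_of_bool[OF fY'] by (rule sum.remove[OF fX' x])
    moreover have "real (card X') = real (card (X' - {x})) + 1"
      using card.remove[OF fX' x] by simp
    ultimately have "\<phi> (X' - {x}, Y') > \<phi> (X', Y')"
      unfolding \<phi>_def by (simp add: distrib_right)
    then show False using maximal sub by (meson Diff_subset order_trans not_le)
  qed
  have deg_Y: "real (card {x\<in>X'. R x y}) \<ge> t" if y: "y \<in> Y'" for y
  proof (rule ccontr)
    assume "\<not> ?thesis"
    moreover have "e X' Y' = real (card {x\<in>X'. R x y}) + e X' (Y' - {y})"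
      unfolding e_def card_filter_eq_sum_of_bool[OF fX']
      by (simp only: sum.remove[OF fY' y] sum.distrib)
    moreover have "real (card Y') = real (card (Y' - {y})) + 1"
      using card.remove[OF fY' y] by simp
    ultimately have "\<phi> (X', Y' - {y}) > \<phi> (X', Y')"
      unfolding \<phi>_def by (simp add: distrib_right)
    then show False using maximal sub by (meson Diff_subset order_trans not_le)
  qed
  show thesis using sub edge deg_X deg_Y by (intro that) auto
qed

lemma bipartite_subgraph_of_relation:
  assumes G: "simple_graph V E" and XY: "X \<subseteq> V" "Y \<subseteq> V" "X \<inter> Y = {}"
    and RE: "\<forall>x y. R x y \<longrightarrow> E x y"
  obtains E' where "subgraph (X \<union> Y) E' V E" "bipartite_parts (X \<union> Y) E' X Y"
    "(\<exists>x y. E' x y) \<longleftrightarrow> (\<exists>x\<in>X. \<exists>y\<in>Y. R x y)"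
    "\<forall>x\<in>X. degree (X \<union> Y) E' x = card {y\<in>Y. R x y}"
    "\<forall>y\<in>Y. degree (X \<union> Y) E' y = card {x\<in>X. R x y}"
proof
  define E' where "E' u w \<longleftrightarrow> (u \<in> X \<and> w \<in> Y \<and> R u w) \<or> (u \<in> Y \<and> w \<in> X \<and> R w u)" for u w
  have "finite (X \<union> Y)" using G XY by (auto simp: simple_graph_def intro: finite_subset)
  then show "subgraph (X \<union> Y) E' V E"
    using G XY RE by (auto simp: subgraph_def simple_graph_def E'_def)
  show "bipartite_parts (X \<union> Y) E' X Y"
    using XY by (auto simp: bipartite_parts_def E'_def)
  show "(\<exists>x y. E' x y) \<longleftrightarrow> (\<exists>x\<in>X. \<exists>y\<in>Y. R x y)"
    by (auto simp: E'_def)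
  have "{u \<in> X \<union> Y. E' x u} = {y\<in>Y. R x y}" if "x \<in> X" for x
    using that XY by (auto simp: E'_def)
  then show "\<forall>x\<in>X. degree (X \<union> Y) E' x = card {y\<in>Y. R x y}"
    by (simp add: degree_def)
  have "{u \<in> X \<union> Y. E' y u} = {x\<in>X. R x y}" if "y \<in> Y" for y
    using that XY by (auto simp: E'_def)
  then show "\<forall>y\<in>Y. degree (X \<union> Y) E' y = card {x\<in>X. R x y}"
    by (simp add: degree_def)
qed

lemma bipartite_subgraph_of_dense_relation:
  fixes a t :: real
  assumes G: "simple_graph V E" and XY: "X \<subseteq> V" "Y \<subseteq> V" "X \<inter> Y = {}"
    and RE: "\<forall>x y. R x y \<longrightarrow> E x y"
    and bounded: "\<forall>x\<in>X. card {y\<in>Y. R x y} \<le> M" "\<forall>y\<in>Y. card {x\<in>X. R x y} \<le> M"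
    and a0: "a \<ge> 0" and t0: "t \<ge> 0"
    and dense: "(\<Sum>x\<in>X. real (card {y\<in>Y. R x y})) > real (card X) * a + real (card Y) * t"
  obtains V'' E'' X' Y' where "subgraph V'' E'' V E" "\<exists>x y. E'' x y" "bipartite_parts V'' E'' X' Y'"
    "max_degree V'' E'' \<le> M" "\<forall>x\<in>X'. real (degree V'' E'' x) \<ge> a" "\<forall>y\<in>Y'. real (degree V'' E'' y) \<ge> t"
proof -
  have fX: "finite X" and fY: "finite Y" using G XY by (auto simp: simple_graph_def intro: finite_subset)
  obtain X' Y' where sub: "X' \<subseteq> X" "Y' \<subseteq> Y" and edge: "\<exists>x\<in>X'. \<exists>y\<in>Y'. R x y"
    and deg: "\<forall>x\<in>X'. real (card {y\<in>Y'. R x y}) \<ge> a" "\<forall>y\<in>Y'. real (card {x\<in>X'. R x y}) \<ge> t"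
    by (rule bipartite_relation_min_degree_core[OF fX fY a0 t0 dense])
  have "X' \<subseteq> V" "Y' \<subseteq> V" "X' \<inter> Y' = {}" using XY sub by auto
  then obtain E'' where H: "subgraph (X' \<union> Y') E'' V E" "bipartite_parts (X' \<union> Y') E'' X' Y'"
    "(\<exists>x y. E'' x y) \<longleftrightarrow> (\<exists>x\<in>X'. \<exists>y\<in>Y'. R x y)"
    "\<forall>x\<in>X'. degree (X' \<union> Y') E'' x = card {y\<in>Y'. R x y}"
    "\<forall>y\<in>Y'. degree (X' \<union> Y') E'' y = card {x\<in>X'. R x y}"
    by (rule bipartite_subgraph_of_relation[OF G _ _ _ RE])
  have "degree (X' \<union> Y') E'' v \<le> M" if "v \<in> X' \<union> Y'" for v
  proof (cases "v \<in> X'")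
    case True
    then have "card {y\<in>Y'. R v y} \<le> card {y\<in>Y. R v y}"
      using sub fY by (intro card_mono) auto
    also have "\<dots> \<le> M" using bounded(1) True sub by auto
    finally show ?thesis using H(4) True by simp
  next
    case False
    with that have "v \<in> Y'" by simp
    then have "card {x\<in>X'. R x v} \<le> card {x\<in>X. R x v}"
      using sub fX by (intro card_mono) auto
    also have "\<dots> \<le> M" using bounded(2) \<open>v \<in> Y'\<close> sub by auto
    finally show ?thesis using H(5) \<open>v \<in> Y'\<close> by simp
  qed
  then have "max_degree (X' \<union> Y') E'' \<le> M"
    using H(1) by (intro max_degree_le) (auto simp: subgraph_def simple_graph_def)
  moreover have "\<exists>x y. E'' x y" using H(3) edge by blast
  ultimately show thesis using H deg by (intro that) auto
qed

definition cut_degree :: "'a set \<Rightarrow> ('a \<Rightarrow> 'a \<Rightarrow> bool) \<Rightarrow> 'a set \<Rightarrow> 'a \<Rightarrow> nat" where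
  "cut_degree V E S v = card {w\<in>V. E v w \<and> (v \<in> S) \<noteq> (w \<in> S)}"

text \<open>Take a maximum cut: moving a single vertex \<open>v\<close> across it changes the cut size by
  \<open>degree v - 2 * cut_degree v\<close>.\<close>

lemma ex_cut_half_degree:
  assumes G: "simple_graph V E"
  obtains S where "\<forall>v\<in>V. degree V E v \<le> 2 * cut_degree V E S v"
proof -
  have fV: "finite V" and sym: "\<And>x y. E x y \<Longrightarrow> E y x" and irr: "\<And>x. \<not> E x x"
    using G by (auto simp: simple_graph_def)
  define cut where "cut S = (\<Sum>u\<in>V. \<Sum>w\<in>V. (of_bool (E u w \<and> (u\<in>S) \<noteq> (w\<in>S)) :: real))"
    for S
  obtain S where "S \<in> Pow V" and max: "\<forall>S'\<in>Pow V. cut S' \<le> cut S"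
    using ex_maximizer_if_finite[of "Pow V" cut] fV by auto
  have "\<forall>v\<in>V. degree V E v \<le> 2 * cut_degree V E S v"
  proof
    fix v assume v: "v \<in> V"
    define S' where "S' = (if v \<in> S then S - {v} else insert v S)"
    have mem: "(u \<in> S') = (if u = v then v \<notin> S else u \<in> S)" for u
      by (auto simp: S'_def)
    define F where "F w = (of_bool (E v w) :: real) - 2 * of_bool (E v w \<and> (v\<in>S) \<noteq> (w\<in>S))"
      for w
    have flip: "(of_bool (E u w \<and> (u\<in>S') \<noteq> (w\<in>S')) :: real) - of_bool (E u w \<and> (u\<in>S) \<noteq> (w\<in>S))
       = (if u = v then F w else 0) + (if w = v then F u else 0)" for u w
      using sym irr unfolding F_def mem by (cases "u = v"; cases "w = v"; auto)
    have "cut S' - cut S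
        = (\<Sum>u\<in>V. \<Sum>w\<in>V. (if u = v then F w else 0) + (if w = v then F u else 0))"
      unfolding cut_def flip[symmetric] by (simp only: sum_subtractf)
    also have "\<dots> = (\<Sum>u\<in>V. \<Sum>w\<in>V. (if u = v then F w else 0))
        + (\<Sum>u\<in>V. \<Sum>w\<in>V. (if w = v then F u else 0))"
      by (simp only: sum.distrib)
    also have "(\<Sum>u\<in>V. \<Sum>w\<in>V. (if u = v then F w else 0)) = (\<Sum>u\<in>V. if u = v then sum F V else 0)"
      by (rule sum.cong) auto
    also have "\<dots> = sum F V" using v fV by simp
    also have "(\<Sum>u\<in>V. \<Sum>w\<in>V. (if w = v then F u else 0)) = sum F V"
      using v fV by (simp add: sum.delta)
    finally have "cut S' - cut S = 2 * sum F V" by simp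
    moreover have "S' \<in> Pow V" using \<open>S \<in> Pow V\<close> v by (auto simp: S'_def)
    then have "cut S' \<le> cut S" using max by blast
    ultimately have "sum F V \<le> 0" by simp
    then have "real (degree V E v) \<le> 2 * real (cut_degree V E S v)"
      unfolding F_def degree_def cut_degree_def card_filter_eq_sum_of_bool[OF fV]
      by (simp only: sum_subtractf sum_distrib_left[symmetric])
    then show "degree V E v \<le> 2 * cut_degree V E S v" by linarith
  qed
  then show thesis by (rule that)
qed

text \<open>Of the two ends of an edge, the one with the smaller value of \<open>c\<close> lies below the
  dyadic bound \<open>2 * 2 ^ floor_log (c _)\<close> of the other.\<close>

lemma sum_card_le_twice_sum_card_dyadic:
  fixes P :: "'a \<Rightarrow> 'a \<Rightarrow> bool" and c :: "'a \<Rightarrow> nat"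
  assumes fV: "finite V" and sym: "\<And>x y. P x y \<Longrightarrow> P y x"
  shows "(\<Sum>x\<in>V. card {y\<in>V. P x y})
    \<le> 2 * (\<Sum>x\<in>V. card {y\<in>V. P x y \<and> c y < 2 * 2 ^ floor_log (c x)})"
proof -
  define Q where "Q x y \<longleftrightarrow> P x y \<and> c y < 2 * 2 ^ floor_log (c x)" for x y
  have "P x y \<Longrightarrow> Q x y \<or> Q y x" for x y
    using sym[of x y] floor_log_exp2_gt[of "c x"] floor_log_exp2_gt[of "c y"]
    unfolding Q_def by linarith
  then have "card {y\<in>V. P x y} \<le> card ({y\<in>V. Q x y} \<union> {y\<in>V. Q y x})" for x
    using fV by (intro card_mono) auto
  also have "\<dots> x \<le> card {y\<in>V. Q x y} + card {y\<in>V. Q y x}" for x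
    by (rule card_Un_le)
  finally have "(\<Sum>x\<in>V. card {y\<in>V. P x y}) \<le> (\<Sum>x\<in>V. card {y\<in>V. Q x y} + card {y\<in>V. Q y x})"
    by (intro sum_mono)
  also have "\<dots> = (\<Sum>x\<in>V. card {y\<in>V. Q x y}) + (\<Sum>x\<in>V. card {y\<in>V. Q y x})"
    by (rule sum.distrib)
  also have "(\<Sum>x\<in>V. card {y\<in>V. Q y x}) = (\<Sum>x\<in>V. \<Sum>y\<in>V. of_bool (Q y x))"
    using fV by (simp add: Int_def)
  also have "\<dots> = (\<Sum>y\<in>V. \<Sum>x\<in>V. of_bool (Q y x))"
    by (rule sum.swap)
  also have "\<dots> = (\<Sum>x\<in>V. card {y\<in>V. Q x y})"
    using fV by (simp add: Int_def)
  finally show ?thesis by (simp add: Q_def)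
qed

definition low_cut_degree :: "'a set \<Rightarrow> ('a \<Rightarrow> 'a \<Rightarrow> bool) \<Rightarrow> 'a set \<Rightarrow> 'a \<Rightarrow> nat" where
  "low_cut_degree V E S v = card {w\<in>V. E v w \<and> (v \<in> S) \<noteq> (w \<in> S) \<and>
     cut_degree V E S w < 2 * 2 ^ floor_log (cut_degree V E S v)}"

lemma low_cut_degree_le_cut_degree:
  assumes "finite V"
  shows "low_cut_degree V E S v \<le> cut_degree V E S v"
  unfolding low_cut_degree_def cut_degree_def using assms by (intro card_mono) auto

lemma sum_cut_degree_le_twice_low_cut_degree:
  assumes G: "simple_graph V E"
  shows "(\<Sum>v\<in>V. cut_degree V E S v) \<le> 2 * (\<Sum>v\<in>V. low_cut_degree V E S v)"
proof -
  have "finite V" and "\<And>x y. E x y \<and> (x \<in> S) \<noteq> (y \<in> S) \<Longrightarrow> E y x \<and> (y \<in> S) \<noteq> (x \<in> S)"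
    using G by (auto simp: simple_graph_def)
  from sum_card_le_twice_sum_card_dyadic[OF this, where c = "cut_degree V E S"] show ?thesis
    by (simp add: cut_degree_def low_cut_degree_def conj_assoc)
qed

lemma sum_degree_le_excess_low_cut_degree:
  assumes G: "simple_graph V E" and S: "\<forall>v\<in>V. degree V E v \<le> 2 * cut_degree V E S v"
  shows "39 / 160 * (\<Sum>v\<in>V. real (degree V E v))
    \<le> (\<Sum>v\<in>V. real (low_cut_degree V E S v) - real (cut_degree V E S v) / 80)"
proof -
  define c where "c = cut_degree V E S"
  have "(\<Sum>v\<in>V. real (degree V E v)) \<le> (\<Sum>v\<in>V. 2 * real (c v))"
  proof (intro sum_mono)
    fix v assume "v \<in> V"
    then have "degree V E v \<le> 2 * c v" using S by (simp add: c_def)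
    then show "real (degree V E v) \<le> 2 * real (c v)" by linarith
  qed
  moreover have "real (\<Sum>v\<in>V. c v) \<le> real (2 * (\<Sum>v\<in>V. low_cut_degree V E S v))"
    using sum_cut_degree_le_twice_low_cut_degree[OF G, of S] unfolding c_def by (rule of_nat_mono)
  ultimately show ?thesis
    unfolding sum_subtractf c_def[symmetric] sum_divide_distrib[symmetric] sum_distrib_left[symmetric]
    by simp
qed

lemma exists_heavy_dyadic_class:
  assumes G: "simple_graph V E" and pos: "avg_degree V E > 0"
    and S: "\<forall>v\<in>V. degree V E v \<le> 2 * cut_degree V E S v"
  obtains i s where
    "real (card V) * (avg_degree V E / (20 * log 2 (real (card V))))
      < (\<Sum>x\<in>{x\<in>V. 0 < cut_degree V E S x \<and> floor_log (cut_degree V E S x) = i \<and> (x \<in> S) = s}.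
           real (low_cut_degree V E S x) - real (cut_degree V E S x) / 80)"
proof -
  define n where "n = card V"
  define d where "d = avg_degree V E"
  define c where "c = cut_degree V E S"
  define g where "g x = real (low_cut_degree V E S x) - real (c x) / 80" for x
  define L where "L = floor_log n"
  define t where "t = d / (20 * log 2 (real n))"
  have fV: "finite V" using G by (simp add: simple_graph_def)
  have n2: "n \<ge> 2" unfolding n_def using two_le_card_if_avg_degree_pos[OF G pos] .
  have log_ge1: "log 2 (real n) \<ge> 1" using n2 by simp
  have nd_pos: "real n * d > 0" using n2 pos by (simp add: d_def)
  have "real n * d = (\<Sum>v\<in>V. real (degree V E v))"
    using n2 by (simp add: n_def d_def avg_degree_def)
  with sum_degree_le_excess_low_cut_degree[OF G S]
  have sum_g: "(\<Sum>x\<in>V. g x) \<ge> 39 / 160 * (real n * d)" by (simp add: g_def c_def)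
  define V' where "V' = {x\<in>V. 0 < c x}"
  have "g x = 0" if "x \<in> V - V'" for x
    using that low_cut_degree_le_cut_degree[OF fV, of E S x] by (simp add: V'_def g_def c_def)
  then have "(\<Sum>x\<in>V'. g x) = (\<Sum>x\<in>V. g x)"
    using fV by (intro sum.mono_neutral_left) (auto simp: V'_def)
  moreover have "real (card ({..L} \<times> (UNIV :: bool set))) * (real n * t) \<le> real n * d / 5"
  proof -
    have "real L + 1 \<le> 2 * log 2 (real n)"
      using floor_log_le_log[of n] n2 log_ge1 unfolding L_def by linarith
    then have "(real L + 1) * (real n * d) \<le> 2 * log 2 (real n) * (real n * d)"
      using nd_pos by (intro mult_right_mono) auto
    then show ?thesis using log_ge1 by (simp add: t_def card_cartesian_product field_simps)
  qed
  ultimately have "(\<Sum>x\<in>V'. g x) > real (card ({..L} \<times> (UNIV :: bool set))) * (real n * t)"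
    using sum_g nd_pos by linarith
  moreover have "c x \<le> n" for x
    unfolding c_def cut_degree_def n_def using fV by (intro card_mono) auto
  then have "(\<lambda>x. (floor_log (c x), x \<in> S)) ` V' \<subseteq> {..L} \<times> UNIV"
    by (auto simp: L_def intro: floor_log_le_iff)
  moreover have "finite V'" using fV by (simp add: V'_def)
  ultimately obtain F where heavy: "(\<Sum>x\<in>{x\<in>V'. (floor_log (c x), x \<in> S) = F}. g x) > real n * t"
    by (elim ex_fibre_sum_gt[rotated 2]) auto
  obtain i s where "F = (i, s)" by (cases F)
  then show thesis using heavy
    by (intro that[of i s]) (simp add: n_def d_def t_def c_def g_def V'_def conj_assoc)
qed

lemma exists_dense_dyadic_relation:
  assumes G: "simple_graph V E" and pos: "avg_degree V E > 0"
  obtains X Y R and M :: nat where "X \<subseteq> V" "Y \<subseteq> V" "X \<inter> Y = {}" "\<forall>x y. R x y \<longrightarrow> E x y"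
    "\<forall>x\<in>X. card {y\<in>Y. R x y} \<le> M" "\<forall>y\<in>Y. card {x\<in>X. R x y} \<le> M"
    "(\<Sum>x\<in>X. real (card {y\<in>Y. R x y})) > real (card X) * (real M / 160)
       + real (card Y) * (avg_degree V E / (20 * log 2 (real (card V))))"
proof -
  have fV: "finite V" and sym: "\<And>x y. E x y \<Longrightarrow> E y x" using G by (auto simp: simple_graph_def)
  obtain S where "\<forall>v\<in>V. degree V E v \<le> 2 * cut_degree V E S v"
    using ex_cut_half_degree[OF G] .
  from exists_heavy_dyadic_class[OF G pos this] obtain i s where heavy:
    "real (card V) * (avg_degree V E / (20 * log 2 (real (card V))))
      < (\<Sum>x\<in>{x\<in>V. 0 < cut_degree V E S x \<and> floor_log (cut_degree V E S x) = i \<and> (x \<in> S) = s}.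
           real (low_cut_degree V E S x) - real (cut_degree V E S x) / 80)" .
  define c where "c = cut_degree V E S"
  define t where "t = avg_degree V E / (20 * log 2 (real (card V)))"
  define M :: nat where "M = 2 * 2 ^ i"
  define X where "X = {x\<in>V. 0 < c x \<and> floor_log (c x) = i \<and> (x \<in> S) = s}"
  define Y where "Y = {y\<in>V. (y \<in> S) \<noteq> s}"
  define R where "R x y \<longleftrightarrow> E x y \<and> (x \<in> S) \<noteq> (y \<in> S) \<and> c y < M" for x y
  have t_nonneg: "t \<ge> 0"
    using two_le_card_if_avg_degree_pos[OF G pos] pos by (simp add: t_def)
  have row: "card {y\<in>Y. R x y} = low_cut_degree V E S x" if "x \<in> X" for x
    using that unfolding low_cut_degree_def
    by (auto simp: X_def Y_def R_def M_def c_def intro!: arg_cong[where f = card])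
  have scale: "M \<le> 2 * c x" "c x < M" if "x \<in> X" for x
    using that floor_log_exp2_le[of "c x"] floor_log_exp2_gt[of "c x"] by (auto simp: X_def M_def)
  have column: "card {x\<in>X. R x y} \<le> M" for y
  proof (cases "{x\<in>X. R x y} = {}")
    case False
    then have "c y < M" by (auto simp: R_def)
    moreover have "card {x\<in>X. R x y} \<le> c y"
      unfolding c_def cut_degree_def using fV sym by (intro card_mono) (auto simp: X_def R_def)
    ultimately show ?thesis by simp
  qed (simp del: Collect_empty_eq)
  have "real (card X) * (real M / 160) \<le> (\<Sum>x\<in>X. real (c x) / 80)"
  proof (intro sum_bounded_below)
    fix x assume "x \<in> X"
    then have "real M \<le> 2 * real (c x)" using scale(1) by fastforce
    then show "real M / 160 \<le> real (c x) / 80" by simp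
  qed
  moreover have "real (card Y) * t \<le> real (card V) * t"
    using fV t_nonneg by (intro mult_right_mono) (auto simp: Y_def intro: card_mono)
  moreover have "(\<Sum>x\<in>X. real (card {y\<in>Y. R x y}))
      = (\<Sum>x\<in>X. real (low_cut_degree V E S x) - real (c x) / 80) + (\<Sum>x\<in>X. real (c x) / 80)"
    using row by (simp add: sum_subtractf)
  ultimately have dense: "(\<Sum>x\<in>X. real (card {y\<in>Y. R x y})) > real (card X) * (real M / 160)
      + real (card Y) * (avg_degree V E / (20 * log 2 (real (card V))))"
    using heavy unfolding t_def X_def c_def by linarith
  have "\<forall>x\<in>X. card {y\<in>Y. R x y} \<le> M"
  proof
    fix x assume "x \<in> X"
    with row scale(2) low_cut_degree_le_cut_degree[OF fV, of E S x]
    show "card {y\<in>Y. R x y} \<le> M" unfolding c_def by fastforce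
  qed
  moreover have "X \<subseteq> V" "Y \<subseteq> V" "X \<inter> Y = {}" "\<forall>x y. R x y \<longrightarrow> E x y"
    by (auto simp: X_def Y_def R_def)
  ultimately show thesis using column dense by (intro that) auto
qed

theorem lemma4p3:
  shows "\<exists>d0::real. \<forall>(V::nat set) E d. simple_graph V E \<and> V \<noteq> {} \<and>
           d = avg_degree V E \<and> d \<ge> d0 \<longrightarrow>
           (\<exists>V'' E'' X Y. subgraph V'' E'' V E \<and> (\<exists>x y. E'' x y) \<and>
              bipartite_parts V'' E'' X Y \<and>
              (\<forall>x\<in>X. real (degree V'' E'' x) \<ge> real (max_degree V'' E'') / 160) \<and>
              (\<forall>y\<in>Y. real (degree V'' E'' y) \<ge> d / (20 * log 2 (real (card V)))))"
proof (intro exI[of _ 1] allI impI, elim conjE)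
  fix V :: "nat set" and E d
  assume G: "simple_graph V E" and d: "d = avg_degree V E" "d \<ge> 1"
  define t where "t = d / (20 * log 2 (real (card V)))"
  have pos: "avg_degree V E > 0" using d by simp
  have t0: "t \<ge> 0" using two_le_card_if_avg_degree_pos[OF G pos] d by (simp add: t_def)
  obtain X Y R M where rel: "X \<subseteq> V" "Y \<subseteq> V" "X \<inter> Y = {}" "\<forall>x y. R x y \<longrightarrow> E x y"
    "\<forall>x\<in>X. card {y\<in>Y. R x y} \<le> M" "\<forall>y\<in>Y. card {x\<in>X. R x y} \<le> M"
    "(\<Sum>x\<in>X. real (card {y\<in>Y. R x y})) > real (card X) * (real M / 160) + real (card Y) * t"
    by (rule exists_dense_dyadic_relation[OF G pos, folded d(1), folded t_def])
  have "real M / 160 \<ge> 0" by simp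
  obtain V'' E'' X' Y' where "subgraph V'' E'' V E" "\<exists>x y. E'' x y" "bipartite_parts V'' E'' X' Y'"
    "max_degree V'' E'' \<le> M" "\<forall>x\<in>X'. real (degree V'' E'' x) \<ge> real M / 160"
    "\<forall>y\<in>Y'. real (degree V'' E'' y) \<ge> t"
    by (rule bipartite_subgraph_of_dense_relation[OF G rel(1-6) \<open>real M / 160 \<ge> 0\<close> t0 rel(7)])
  moreover from \<open>max_degree V'' E'' \<le> M\<close> have "real (max_degree V'' E'') / 160 \<le> real M / 160"
    by simp
  ultimately show "\<exists>V'' E'' X Y. subgraph V'' E'' V E \<and> (\<exists>x y. E'' x y) \<and>
      bipartite_parts V'' E'' X Y \<and>
      (\<forall>x\<in>X. real (degree V'' E'' x) \<ge> real (max_degree V'' E'') / 160) \<and>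
      (\<forall>y\<in>Y. real (degree V'' E'' y) \<ge> d / (20 * log 2 (real (card V))))"
    unfolding t_def by (intro exI[of _ V''] exI[of _ E''] exI[of _ X'] exI[of _ Y'] conjI)
      (auto intro: order.trans)
qed

end
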